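(* Let $n,r\geq1$, $\epsilon>0$, and let $t\mapsto(x_1(t),\ldots,x_r(t))$ be a continuous map $[0,\epsilon)\to(\mathbb R^n)^r$. For $I\subseteq\{1,\ldots,r\}$ and $t\in[0,\epsilon)$, let $F_I(t)$ be the convex hull of $\{x_i(t): i\in I\}$, and $P(t)=F_{\{1,\ldots,r\}}(t)$. Assume that for every $t\in(0,\epsilon)$ the points $x_i(t)$ are pairwise distinct vertices of $P(t)$, and that whenever $F_I(t)$ is a face of $P(t)$ of dimension $k$ for some $t\in(0,\epsilon)$, then $F_I(t)$ is a face of $P(t)$ of dimension $k$ for all $t\in(0,\epsilon)$. Suppose moreover that the directions of the edges of $P(t)$ are constant for $t\in(0,\epsilon)$, i.e. if $F_I(t)$ with $|I|=2$ is an edge of $P(t)$, then $F_I(t')$ and $F_I(t'')$ are parallel for all $t',t''\in(0,\epsilon)$. Then for every $k$-dimensional face $F$ of $P(0)$ there exists $I$ such that $F_I(t)$ is a $k$-dimensional face of $P(t)$ for $t\in(0,\epsilon)$ and $F_I(0)=F$. *)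

theory Defs
  imports "HOL-Analysis.Analysis"
begin

definition conv_pts :: "(nat \<Rightarrow> real \<Rightarrow> 'a::euclidean_space) \<Rightarrow> nat set \<Rightarrow> real \<Rightarrow> 'a set" where
  "conv_pts x I t = convex hull ((\<lambda>i. x i t) ` I)"

definition parallel_sets :: "'a::real_vector set \<Rightarrow> 'a set \<Rightarrow> bool" where
  "parallel_sets S T \<longleftrightarrow> (\<exists>v. affine hull S = (\<lambda>y. v + y) ` (affine hull T))"

end

theory Submission
  imports Defs
begin

text \<open>Fix a time t0 in (0, \<epsilon>). A nonempty face F of P(0) is exposed by a functional c. The
  indices I of the points maximizing c at t0 do not depend on t0: c is constant on them at
  every time, since an edge of F_I(t) on which c varied would be parallel to an edge of F_I(t0),
  where c is constant. Hence F_I(t) is a face for all t > 0, and in the limit, after perturbing c,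
  F_I(0) = F. If dim F_I(0) < dim F_I(t), some functional is constant on the points x_i(0),
  i \<in> I, but not on the x_i(t); its maximizing indices form a proper subset of I with the same
  limit face, so descending on |I| yields a face of constant dimension.\<close>

definition maximizers :: "('i \<Rightarrow> real) \<Rightarrow> 'i set \<Rightarrow> 'i set" where
  "maximizers f I = {k \<in> I. \<forall>l\<in>I. f l \<le> f k}"

lemma maximizers_subset: "maximizers f I \<subseteq> I"
  by (auto simp: maximizers_def)

lemma maximizers_nonempty:
  assumes "finite I" "I \<noteq> {}"
  shows "maximizers f I \<noteq> {}"
proof -
  have "Max (f ` I) \<in> f ` I"
    using assms by simp
  then obtain k where "k \<in> I" "f k = Max (f ` I)"
    by (metis imageE)
  then have "k \<in> maximizers f I"
    using assms by (simp add: maximizers_def)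
  then show ?thesis by blast
qed

lemma maximizers_eq_self_iff: "maximizers f I = I \<longleftrightarrow> f constant_on I"
proof
  assume eq: "maximizers f I = I"
  have "f l \<le> f k" if "k \<in> I" "l \<in> I" for k l
  proof -
    from \<open>k \<in> I\<close> eq have "k \<in> maximizers f I" by simp
    then show ?thesis using \<open>l \<in> I\<close> by (simp add: maximizers_def)
  qed
  then have "f k = f l" if "k \<in> I" "l \<in> I" for k l
    using that by (blast intro: antisym)
  then show "f constant_on I"
    unfolding constant_on_def by blast
qed (auto simp: maximizers_def constant_on_def)

lemma constant_on_image_iff: "f constant_on g ` A \<longleftrightarrow> (\<lambda>k. f (g k)) constant_on A"
  unfolding constant_on_def by auto

lemma eventually_maximizers_subset:
  fixes f :: "'a \<Rightarrow> 'i \<Rightarrow> real"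
  assumes "finite I" and lim: "\<And>k. k \<in> I \<Longrightarrow> ((\<lambda>s. f s k) \<longlongrightarrow> g k) F"
  shows "eventually (\<lambda>s. maximizers (f s) I \<subseteq> maximizers g I) F"
proof (cases "I = {}")
  case False
  then obtain i where i: "i \<in> maximizers g I"
    using maximizers_nonempty[OF \<open>finite I\<close>] by blast
  have "eventually (\<lambda>s. f s k < f s i) F" if k: "k \<in> I - maximizers g I" for k
  proof -
    have "g k < g i"
      using i k by (force simp: maximizers_def)
    have "((\<lambda>s. f s i - f s k) \<longlongrightarrow> g i - g k) F"
      using i k by (intro tendsto_diff lim) (auto simp: maximizers_def)
    then have "eventually (\<lambda>s. 0 < f s i - f s k) F"
      by (rule order_tendstoD(1)) (use \<open>g k < g i\<close> in simp)
    then show ?thesis by simp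
  qed
  then have "eventually (\<lambda>s. \<forall>k \<in> I - maximizers g I. f s k < f s i) F"
    using \<open>finite I\<close> by (intro eventually_ball_finite) auto
  then show ?thesis
  proof eventually_elim
    case (elim s)
    show ?case
    proof
      fix k assume "k \<in> maximizers (f s) I"
      then have "k \<in> I" "f s i \<le> f s k"
        using i by (auto simp: maximizers_def)
      show "k \<in> maximizers g I"
      proof (rule ccontr)
        assume "k \<notin> maximizers g I"
        then have "f s k < f s i"
          using elim \<open>k \<in> I\<close> by blast
        then show False
          using \<open>f s i \<le> f s k\<close> by simp
      qed
    qed
  qed
qed (simp add: maximizers_def)

lemma inner_le_on_convex_hull:
  fixes c :: "'a::real_inner"
  assumes "z \<in> convex hull X" and "\<And>y. y \<in> X \<Longrightarrow> c \<bullet> y \<le> m"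
  shows "c \<bullet> z \<le> m"
proof -
  have "convex hull X \<subseteq> {y. c \<bullet> y \<le> m}"
    using assms(2) by (intro hull_minimal) (auto simp: convex_halfspace_le)
  then show ?thesis using assms(1) by blast
qed

lemma inner_ge_on_convex_hull:
  fixes c :: "'a::real_inner"
  assumes "z \<in> convex hull X" and "\<And>y. y \<in> X \<Longrightarrow> m \<le> c \<bullet> y"
  shows "m \<le> c \<bullet> z"
  using inner_le_on_convex_hull[of z X "- c" "- m"] assms by simp

lemma inner_constant_on_affine_hull:
  fixes c :: "'a::real_inner"
  assumes "(\<lambda>y. c \<bullet> y) constant_on X"
  shows "(\<lambda>y. c \<bullet> y) constant_on affine hull X"
proof -
  obtain m where "\<forall>y\<in>X. c \<bullet> y = m"
    using assms unfolding constant_on_def by blast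
  then have "affine hull X \<subseteq> {y. c \<bullet> y = m}"
    by (intro hull_minimal) (auto simp: affine_hyperplane)
  then show ?thesis
    unfolding constant_on_def by blast
qed

lemma inner_constant_on_convex_hull:
  fixes c :: "'a::real_inner"
  assumes "(\<lambda>y. c \<bullet> y) constant_on X"
  shows "(\<lambda>y. c \<bullet> y) constant_on convex hull X"
  using inner_constant_on_affine_hull[OF assms] convex_hull_subset_affine_hull
  by (rule constant_on_subset)

lemma inner_constant_on_convex_hull_iff:
  fixes c :: "'a::real_inner"
  shows "(\<lambda>y. c \<bullet> y) constant_on convex hull X \<longleftrightarrow> (\<lambda>y. c \<bullet> y) constant_on X"
proof
  assume "(\<lambda>y. c \<bullet> y) constant_on convex hull X"
  then show "(\<lambda>y. c \<bullet> y) constant_on X"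
    by (rule constant_on_subset) (rule hull_subset)
qed (rule inner_constant_on_convex_hull)

lemma parallel_sets_inner_constant_on:
  fixes c :: "'a::real_inner"
  assumes "parallel_sets A B" and "(\<lambda>y. c \<bullet> y) constant_on B"
  shows "(\<lambda>y. c \<bullet> y) constant_on A"
proof -
  obtain v where v: "affine hull A = (\<lambda>y. v + y) ` (affine hull B)"
    using assms(1) unfolding parallel_sets_def by blast
  obtain m where m: "\<forall>y \<in> affine hull B. c \<bullet> y = m"
    using inner_constant_on_affine_hull[OF assms(2)] unfolding constant_on_def by blast
  have "\<forall>y \<in> affine hull A. c \<bullet> y = c \<bullet> v + m"
    using v m by (auto simp: inner_add_right)
  then show ?thesis
    unfolding constant_on_def by (meson hull_inc)
qed

text \<open>The linear functionals constant on a nonempty set are those orthogonal to the linear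
  span of its difference set, whose dimension is the affine dimension.\<close>
lemma aff_dim_le_if_inner_constant_on:
  fixes A B :: "'a::euclidean_space set"
  assumes "A \<noteq> {}"
    and const: "\<And>u. (\<lambda>y. u \<bullet> y) constant_on A \<Longrightarrow> (\<lambda>y. u \<bullet> y) constant_on B"
  shows "aff_dim B \<le> aff_dim A"
proof (cases "B = {}")
  case True
  then show ?thesis using aff_dim_geq[of A] by simp
next
  case False
  obtain a where a: "a \<in> A" using assms(1) by blast
  obtain b where b: "b \<in> B" using False by blast
  let ?W = "span ((+) (- a) ` A)"
  have "w \<in> ?W" if w: "w \<in> (+) (- b) ` B" for w
  proof -
    obtain y where y: "y \<in> B" "w = - b + y"
      using w by blast
    obtain p z where p: "p \<in> ?W" and z: "\<And>w. w \<in> ?W \<Longrightarrow> orthogonal z w" and "w = p + z"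
      using orthogonal_subspace_decomp_exists[of "(+) (- a) ` A" w] by blast
    have "z \<bullet> y' = z \<bullet> a" if "y' \<in> A" for y'
      using z[of "- a + y'"] that by (auto simp: orthogonal_def inner_diff_right span_base)
    then have "(\<lambda>y. z \<bullet> y) constant_on A"
      unfolding constant_on_def by blast
    then have "z \<bullet> y = z \<bullet> b"
      using const y(1) b unfolding constant_on_def by metis
    then have "z \<bullet> w = 0"
      using y(2) by (simp add: inner_diff_right)
    moreover have "z \<bullet> p = 0"
      using z[OF p] by (simp add: orthogonal_def)
    ultimately have "z = 0"
      using \<open>w = p + z\<close> by (simp add: inner_add_right)
    then show "w \<in> ?W"
      using p \<open>w = p + z\<close> by simp
  qed
  then have "dim ((+) (- b) ` B) \<le> dim ?W"
    by (intro dim_subset) blast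
  then show ?thesis
    using aff_dim_eq_dim[OF hull_inc[OF a]] aff_dim_eq_dim[OF hull_inc[OF b]] by simp
qed

lemma mem_convex_hull_if_inner_le:
  fixes y :: "'a::euclidean_space"
  assumes "finite X" and dominated: "\<And>u. \<exists>z\<in>X. u \<bullet> y \<le> u \<bullet> z"
  shows "y \<in> convex hull X"
proof (rule ccontr)
  assume "y \<notin> convex hull X"
  moreover have "closed (convex hull X)"
    using \<open>finite X\<close> by (simp add: compact_imp_closed finite_imp_compact_convex_hull)
  ultimately obtain a b where "a \<bullet> y < b" "\<forall>z \<in> convex hull X. b < a \<bullet> z"
    using separating_hyperplane_closed_point[of "convex hull X" y] by auto
  moreover obtain z where "z \<in> X" "(- a) \<bullet> y \<le> (- a) \<bullet> z"
    using dominated by blast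
  ultimately show False
    using hull_inc[of z X convex] by fastforce
qed

lemma convex_hull_maximizers_face_of:
  fixes p :: "'i \<Rightarrow> 'a::euclidean_space"
  assumes "finite I"
  shows "convex hull (p ` maximizers (\<lambda>k. c \<bullet> p k) I) face_of convex hull (p ` I)"
proof (cases "I = {}")
  case False
  let ?M = "maximizers (\<lambda>k. c \<bullet> p k) I"
  obtain i where i: "i \<in> ?M"
    using maximizers_nonempty[OF assms False, of "\<lambda>k. c \<bullet> p k"] by blast
  let ?H = "{y. c \<bullet> y = c \<bullet> p i}"
  have "k \<in> ?M \<longleftrightarrow> k \<in> I \<and> c \<bullet> p k = c \<bullet> p i" for k
    using i unfolding maximizers_def by (smt (verit) mem_Collect_eq)
  then have M_eq: "p ` ?M = p ` I \<inter> ?H"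
    by auto
  have "c \<bullet> y \<le> c \<bullet> p i" if "y \<in> convex hull (p ` I)" for y
    using that by (rule inner_le_on_convex_hull) (use i in \<open>auto simp: maximizers_def\<close>)
  then have face: "convex hull (p ` I) \<inter> ?H face_of convex hull (p ` I)"
    by (intro face_of_Int_supporting_hyperplane_le) auto
  obtain S where S: "S \<subseteq> p ` I" "convex hull (p ` I) \<inter> ?H = convex hull S"
    by (rule face_of_convex_hull_subset[OF finite_imp_compact[OF finite_imageI[OF assms]] face])
  then have "S \<subseteq> p ` ?M"
    using M_eq hull_subset[of S convex] by blast
  then have "convex hull (p ` I) \<inter> ?H \<subseteq> convex hull (p ` ?M)"
    using S(2) hull_mono by metis
  moreover have "convex hull (p ` ?M) \<subseteq> convex hull (p ` I)"
    using M_eq by (intro hull_mono) blast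
  moreover have "convex hull (p ` ?M) \<subseteq> ?H"
    using M_eq by (intro hull_minimal) (auto simp: convex_hyperplane)
  ultimately show ?thesis
    using face by (metis Int_greatest subset_antisym)
qed (simp add: maximizers_def)

text \<open>Faces of polytopes are exposed.\<close>
lemma face_of_convex_hull_eq_maximizing:
  fixes X :: "'a::euclidean_space set"
  assumes "finite X" "F face_of convex hull X" "F \<noteq> {}"
  obtains c where "F = {y \<in> convex hull X. \<forall>z\<in>X. c \<bullet> z \<le> c \<bullet> y}"
proof -
  have "F exposed_face_of convex hull X"
    using assms by (simp add: exposed_face_of_polyhedron polytope_convex_hull polytope_imp_polyhedron)
  then obtain c b where cb: "convex hull X \<subseteq> {y. c \<bullet> y \<le> b}" "F = convex hull X \<inter> {y. c \<bullet> y = b}"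
    unfolding exposed_face_of_def by blast
  obtain f where f: "f \<in> F" using assms(3) by blast
  have "y \<in> F" if y: "y \<in> convex hull X" "\<forall>z\<in>X. c \<bullet> z \<le> c \<bullet> y" for y
  proof -
    have "f \<in> convex hull X"
      using f cb(2) by blast
    then have "c \<bullet> f \<le> c \<bullet> y"
      by (rule inner_le_on_convex_hull) (use y(2) in blast)
    then show ?thesis
      using f y cb by auto
  qed
  moreover have "c \<bullet> z \<le> c \<bullet> y" if "y \<in> F" "z \<in> X" for y z
  proof -
    have "z \<in> convex hull X"
      using \<open>z \<in> X\<close> by (rule hull_inc)
    then show ?thesis
      using \<open>y \<in> F\<close> cb by auto
  qed
  ultimately have "F = {y \<in> convex hull X. \<forall>z\<in>X. c \<bullet> z \<le> c \<bullet> y}"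
    using cb(2) by blast
  then show ?thesis ..
qed

text \<open>The relative boundary of a polytope of dimension other than 1 is connected and is the
  union of the finitely many proper faces.\<close>
lemma polytope_inner_constant_on_rel_frontier:
  fixes Q :: "'a::euclidean_space set"
  assumes "polytope Q" "aff_dim Q \<noteq> 1"
    and faces: "\<And>F. F face_of Q \<Longrightarrow> F \<noteq> Q \<Longrightarrow> (\<lambda>y. c \<bullet> y) constant_on F"
  shows "(\<lambda>y. c \<bullet> y) constant_on rel_frontier Q"
proof -
  let ?g = "\<lambda>y. c \<bullet> y"
  have R_eq: "rel_frontier Q = \<Union> {F. F face_of Q \<and> F \<noteq> Q}"
    using assms(1) by (simp add: rel_frontier_of_polyhedron_alt polytope_imp_polyhedron)
  have "finite {F. F face_of Q \<and> F \<noteq> Q}"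
    using finite_polytope_faces[OF assms(1)] by (rule finite_subset[rotated]) auto
  moreover have "finite (?g ` F)" if F: "F face_of Q" "F \<noteq> Q" for F
  proof -
    obtain v where "\<forall>y\<in>F. ?g y = v"
      using faces[OF F] unfolding constant_on_def by blast
    then have "?g ` F \<subseteq> {v}" by blast
    then show ?thesis by (rule finite_subset) simp
  qed
  ultimately have "finite (?g ` rel_frontier Q)"
    unfolding R_eq image_Union by auto
  moreover have "connected (rel_frontier Q)"
    using assms(1,2) by (intro connected_sphere_gen) (simp_all add: polytope_imp_convex polytope_imp_bounded)
  then have "connected (?g ` rel_frontier Q)"
    by (intro connected_continuous_image continuous_intros)
  ultimately have "?g ` rel_frontier Q = {} \<or> (\<exists>v. ?g ` rel_frontier Q = {v})"
    using connected_finite_iff_sing by blast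
  then show ?thesis
    unfolding constant_on_def by blast
qed

lemma polytope_inner_constant_on_if_proper_faces:
  fixes Q :: "'a::euclidean_space set"
  assumes "polytope Q" "aff_dim Q \<noteq> 1"
    and faces: "\<And>F. F face_of Q \<Longrightarrow> F \<noteq> Q \<Longrightarrow> (\<lambda>y. c \<bullet> y) constant_on F"
  shows "(\<lambda>y. c \<bullet> y) constant_on Q"
proof (cases "\<exists>e. Q = {e}")
  case True
  then show ?thesis by (auto simp: constant_on_def)
next
  case False
  have cvx: "convex Q" and cpt: "compact Q"
    using assms(1) polytope_imp_convex polytope_imp_compact by auto
  have extreme: "e \<in> rel_frontier Q" if "e extreme_point_of Q" for e
  proof -
    have "{e} face_of Q"
      using that face_of_singleton by blast
    moreover have "{e} \<noteq> Q"
      using False by blast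
    ultimately show ?thesis
      unfolding rel_frontier_of_polyhedron_alt[OF polytope_imp_polyhedron[OF assms(1)]] by blast
  qed
  have "(\<lambda>y. c \<bullet> y) constant_on {e. e extreme_point_of Q}"
    using polytope_inner_constant_on_rel_frontier[OF assms]
    by (rule constant_on_subset) (auto intro: extreme)
  then have "(\<lambda>y. c \<bullet> y) constant_on convex hull {e. e extreme_point_of Q}"
    by (rule inner_constant_on_convex_hull)
  then show ?thesis
    using Krein_Milman_Minkowski[OF cpt cvx] by simp
qed

lemma polytope_edge_inner_neq:
  fixes Q :: "'a::euclidean_space set"
  assumes "polytope Q" "\<not> (\<lambda>y. c \<bullet> y) constant_on Q"
  shows "\<exists>a b. a \<noteq> b \<and> closed_segment a b face_of Q \<and> c \<bullet> a \<noteq> c \<bullet> b"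
  using assms
proof (induction "nat (aff_dim Q)" arbitrary: Q rule: less_induct)
  case less
  show ?case
  proof (cases "aff_dim Q = 1")
    case True
    have "Q \<noteq> {}"
      using True by auto
    then obtain a b where Q: "Q = closed_segment a b"
      using compact_convex_collinear_segment less.prems(1) True
      by (metis collinear_aff_dim order_refl polytope_imp_compact polytope_imp_convex)
    then have "a \<noteq> b"
      using True by auto
    moreover have "c \<bullet> a \<noteq> c \<bullet> b"
    proof
      assume "c \<bullet> a = c \<bullet> b"
      then have "(\<lambda>y. c \<bullet> y) constant_on {a, b}"
        unfolding constant_on_def by auto
      then show False
        using less.prems(2) inner_constant_on_convex_hull Q by (metis segment_convex_hull)
    qed
    moreover have "closed_segment a b face_of Q"
      using Q less.prems(1) by (simp add: face_of_refl polytope_imp_convex)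
    ultimately show ?thesis by blast
  next
    case False
    obtain F where F: "F face_of Q" "F \<noteq> Q" "\<not> (\<lambda>y. c \<bullet> y) constant_on F"
      using polytope_inner_constant_on_if_proper_faces[OF less.prems(1) False] less.prems(2)
      by blast
    have "F \<noteq> {}"
      using F(3) by (auto simp: constant_on_def)
    then have "0 \<le> aff_dim F"
      by (metis aff_dim_negative_iff not_less)
    then have "nat (aff_dim F) < nat (aff_dim Q)"
      using face_of_aff_dim_lt[OF polytope_imp_convex[OF less.prems(1)] F(1,2)] by simp
    moreover have "polytope F"
      using F(1) less.prems(1) face_of_polytope_polytope by blast
    ultimately obtain a b where "a \<noteq> b" "closed_segment a b face_of F" "c \<bullet> a \<noteq> c \<bullet> b"
      using less.hyps F(3) by blast
    then show ?thesis
      using F(1) face_of_trans by blast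
  qed
qed

lemma nonneg_at_left_endpoint:
  fixes f :: "real \<Rightarrow> real"
  assumes "a < b" "continuous_on {a..<b} f" "\<And>t. t \<in> {a<..<b} \<Longrightarrow> 0 \<le> f t"
  shows "0 \<le> f a"
proof -
  let ?m = "(a + b) / 2"
  have closure: "closure {a<..<?m} = {a..?m}"
    using assms(1) by simp
  have "continuous_on (closure {a<..<?m}) f"
    unfolding closure by (rule continuous_on_subset[OF assms(2)]) (use assms(1) in auto)
  moreover have "a \<in> closure {a<..<?m}"
    unfolding closure using assms(1) by simp
  moreover have "0 \<le> f t" if "t \<in> {a<..<?m}" for t
    using that by (intro assms(3)) simp
  ultimately show ?thesis
    by (rule continuous_ge_on_closure)
qed

locale stable_polytope_family =
  fixes x :: "nat \<Rightarrow> real \<Rightarrow> 'a::euclidean_space"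
    and r :: nat and \<epsilon> :: real
  assumes eps_pos: "\<epsilon> > 0"
    and cont: "\<And>i. i \<in> {1..r} \<Longrightarrow> continuous_on {0..<\<epsilon>} (x i)"
    and faces_stable: "\<And>I k t t'. I \<subseteq> {1..r} \<Longrightarrow> t \<in> {0<..<\<epsilon>} \<Longrightarrow> t' \<in> {0<..<\<epsilon>} \<Longrightarrow>
                     conv_pts x I t face_of conv_pts x {1..r} t \<Longrightarrow> aff_dim (conv_pts x I t) = k \<Longrightarrow>
                     conv_pts x I t' face_of conv_pts x {1..r} t' \<and> aff_dim (conv_pts x I t') = k"
    and edges_parallel: "\<And>I t t' t''. I \<subseteq> {1..r} \<Longrightarrow> card I = 2 \<Longrightarrow>
                     t \<in> {0<..<\<epsilon>} \<Longrightarrow> t' \<in> {0<..<\<epsilon>} \<Longrightarrow> t'' \<in> {0<..<\<epsilon>} \<Longrightarrow>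
                     conv_pts x I t face_of conv_pts x {1..r} t \<Longrightarrow> aff_dim (conv_pts x I t) = 1 \<Longrightarrow>
                     parallel_sets (conv_pts x I t') (conv_pts x I t'')"
begin

definition stable_face :: "nat set \<Rightarrow> bool" where
  "stable_face I \<longleftrightarrow> I \<subseteq> {1..r} \<and> (\<forall>t\<in>{0<..<\<epsilon>}. conv_pts x I t face_of conv_pts x {1..r} t)"

abbreviation top_indices :: "'a \<Rightarrow> nat set \<Rightarrow> real \<Rightarrow> nat set" where
  "top_indices c I t \<equiv> maximizers (\<lambda>k. c \<bullet> x k t) I"

lemma stable_face_finite: "stable_face I \<Longrightarrow> finite I"
  unfolding stable_face_def using finite_subset by blast

lemma stable_face_all: "stable_face {1..r}"
  unfolding stable_face_def conv_pts_def by (simp add: face_of_refl)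

lemma continuous_on_inner_pts: "k \<in> {1..r} \<Longrightarrow> continuous_on {0..<\<epsilon>} (\<lambda>t. c \<bullet> x k t)"
  using cont by (intro continuous_intros) auto

lemma top_indices_face_of:
  assumes "stable_face I" "t \<in> {0<..<\<epsilon>}"
  shows "conv_pts x (top_indices c I t) t face_of conv_pts x {1..r} t"
proof -
  have "conv_pts x (top_indices c I t) t face_of conv_pts x I t"
    unfolding conv_pts_def
    using convex_hull_maximizers_face_of[OF stable_face_finite[OF assms(1)], of "\<lambda>k. x k t" c] .
  then show ?thesis
    using assms face_of_trans unfolding stable_face_def by blast
qed

text \<open>Two top indices at time t0 span a face at t0, hence a face at every time; an edge of that
  face on which c is not constant would be parallel to an edge at t0 on which it is.\<close>
lemma inner_constant_on_top_indices:
  assumes I: "stable_face I" and t0: "t0 \<in> {0<..<\<epsilon>}" and t: "t \<in> {0<..<\<epsilon>}"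
  shows "(\<lambda>k. c \<bullet> x k t) constant_on top_indices c I t0"
proof (rule ccontr)
  let ?S = "top_indices c I t0"
  assume "\<not> (\<lambda>k. c \<bullet> x k t) constant_on ?S"
  then have nonconst: "\<not> (\<lambda>y. c \<bullet> y) constant_on conv_pts x ?S t"
    by (simp add: conv_pts_def inner_constant_on_convex_hull_iff constant_on_image_iff)
  have S_sub: "?S \<subseteq> {1..r}"
    using I maximizers_subset[of _ I] unfolding stable_face_def by (meson subset_trans)
  have S_face: "conv_pts x ?S t face_of conv_pts x {1..r} t"
    using faces_stable[OF S_sub t0 t top_indices_face_of[OF I t0] refl] by blast
  have "polytope (conv_pts x ?S t)"
    unfolding conv_pts_def using stable_face_finite[OF I]
    by (intro polytope_convex_hull) (simp add: maximizers_def)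
  then obtain a b where ab: "a \<noteq> b" "closed_segment a b face_of conv_pts x ?S t" "c \<bullet> a \<noteq> c \<bullet> b"
    using polytope_edge_inner_neq nonconst by blast
  have "a \<in> (\<lambda>k. x k t) ` ?S" "b \<in> (\<lambda>k. x k t) ` ?S"
    using segment_face_of[OF ab(2)] unfolding conv_pts_def
    by (simp_all add: extreme_point_of_convex_hull)
  then obtain p q where pq: "p \<in> ?S" "q \<in> ?S" "a = x p t" "b = x q t"
    by blast
  have seg: "conv_pts x {p, q} t = closed_segment a b"
    unfolding conv_pts_def using pq by (simp add: segment_convex_hull)
  have "parallel_sets (conv_pts x {p, q} t) (conv_pts x {p, q} t0)"
  proof (rule edges_parallel[OF _ _ t t t0])
    show "{p, q} \<subseteq> {1..r}"
      using pq S_sub by auto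
    have "p \<noteq> q"
      using pq ab(1) by blast
    then show "card {p, q} = 2"
      by simp
    show "conv_pts x {p, q} t face_of conv_pts x {1..r} t"
      using seg ab(2) S_face face_of_trans by metis
    show "aff_dim (conv_pts x {p, q} t) = 1"
      using seg ab(1) by (simp add: segment_convex_hull aff_dim_convex_hull)
  qed
  moreover have "(\<lambda>y. c \<bullet> y) constant_on conv_pts x {p, q} t0"
  proof -
    have "c \<bullet> x p t0 = c \<bullet> x q t0"
      using pq(1,2) by (auto simp: maximizers_def intro: antisym)
    then show ?thesis
      unfolding conv_pts_def by (intro inner_constant_on_convex_hull) (simp add: constant_on_def)
  qed
  ultimately have "(\<lambda>y. c \<bullet> y) constant_on closed_segment a b"
    using parallel_sets_inner_constant_on seg by metis
  then show False
    using ab(3) by (auto simp: constant_on_def)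
qed

text \<open>Near a, by continuity no index outside the top indices at a becomes maximal, and the
  top indices at a all tie at every time.\<close>
lemma top_indices_locally_constant:
  assumes I: "stable_face I" and a: "a \<in> {0<..<\<epsilon>}"
  obtains U where "openin (top_of_set {0<..<\<epsilon>}) U" "a \<in> U"
    "\<And>s. s \<in> U \<Longrightarrow> top_indices c I a = top_indices c I s"
proof -
  let ?T = "{0<..<\<epsilon>}"
  have finI: "finite I"
    using I by (rule stable_face_finite)
  have "eventually (\<lambda>s. top_indices c I s \<subseteq> top_indices c I a) (at a within ?T)"
  proof (rule eventually_maximizers_subset[OF finI])
    fix k assume "k \<in> I"
    then have "k \<in> {1..r}"
      using I by (auto simp: stable_face_def)
    then have "continuous_on ?T (\<lambda>s. c \<bullet> x k s)"
      by (rule continuous_on_subset[OF continuous_on_inner_pts]) auto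
    then show "((\<lambda>s. c \<bullet> x k s) \<longlongrightarrow> c \<bullet> x k a) (at a within ?T)"
      using a by (simp add: continuous_on_def)
  qed
  then obtain U where U: "open U" "a \<in> U"
    and sub: "\<And>s. s \<in> U \<Longrightarrow> s \<in> ?T \<Longrightarrow> s \<noteq> a \<Longrightarrow> top_indices c I s \<subseteq> top_indices c I a"
    unfolding eventually_at_topological by blast
  have "top_indices c I a = top_indices c I s" if s: "s \<in> ?T \<inter> U" for s
  proof
    show s_sub: "top_indices c I s \<subseteq> top_indices c I a"
      using sub s by (cases "s = a") auto
    show "top_indices c I a \<subseteq> top_indices c I s"
    proof
      fix i assume i: "i \<in> top_indices c I a"
      then have "I \<noteq> {}"
        by (auto simp: maximizers_def)
      then obtain m where m: "m \<in> top_indices c I s"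
        using maximizers_nonempty[OF finI, of "\<lambda>k. c \<bullet> x k s"] by blast
      have "(\<lambda>k. c \<bullet> x k s) constant_on top_indices c I a"
        using s by (intro inner_constant_on_top_indices[OF I a]) simp
      then have "c \<bullet> x i s = c \<bullet> x m s"
        using i m s_sub unfolding constant_on_def by (metis subsetD)
      then show "i \<in> top_indices c I s"
        using i m by (simp add: maximizers_def)
    qed
  qed
  moreover have "openin (top_of_set ?T) (?T \<inter> U)"
    using U(1) by (rule openin_open_Int)
  ultimately show ?thesis
    using that a U(2) by blast
qed

lemma top_indices_eq:
  assumes I: "stable_face I" and t: "t \<in> {0<..<\<epsilon>}" and t': "t' \<in> {0<..<\<epsilon>}"
  shows "top_indices c I t = top_indices c I t'"
proof (rule connected_equivalence_relation[of "{0<..<\<epsilon>}" t t'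
      "\<lambda>s s'. top_indices c I s = top_indices c I s'"])
  fix a assume "a \<in> {0<..<\<epsilon>}"
  then obtain U where "openin (top_of_set {0<..<\<epsilon>}) U" "a \<in> U"
    "\<And>s. s \<in> U \<Longrightarrow> top_indices c I a = top_indices c I s"
    using top_indices_locally_constant[OF I] by blast
  then show "\<exists>U. openin (top_of_set {0<..<\<epsilon>}) U \<and> a \<in> U \<and>
      (\<forall>s\<in>U. top_indices c I a = top_indices c I s)"
    by blast
qed (use t t' in simp_all)

lemma stable_face_top_indices:
  assumes I: "stable_face I" and t0: "t0 \<in> {0<..<\<epsilon>}"
  shows "stable_face (top_indices c I t0)"
  unfolding stable_face_def
proof
  show "top_indices c I t0 \<subseteq> {1..r}"
    using I maximizers_subset[of _ I] unfolding stable_face_def by (meson subset_trans)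
  show "\<forall>t\<in>{0<..<\<epsilon>}. conv_pts x (top_indices c I t0) t face_of conv_pts x {1..r} t"
    using top_indices_eq[OF I t0] top_indices_face_of[OF I] by simp
qed

lemma top_indices_subset_maximizers_at_0:
  assumes I: "stable_face I" and t0: "t0 \<in> {0<..<\<epsilon>}"
  shows "top_indices c I t0 \<subseteq> maximizers (\<lambda>k. c \<bullet> x k 0) I"
proof
  fix i assume i: "i \<in> top_indices c I t0"
  have "c \<bullet> x j 0 \<le> c \<bullet> x i 0" if j: "j \<in> I" for j
  proof -
    have "i \<in> {1..r}" "j \<in> {1..r}"
      using i j I by (auto simp: stable_face_def maximizers_def)
    then have "continuous_on {0..<\<epsilon>} (\<lambda>t. c \<bullet> x i t - c \<bullet> x j t)"
      by (intro continuous_on_diff continuous_on_inner_pts)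
    moreover have "0 \<le> c \<bullet> x i t - c \<bullet> x j t" if t: "t \<in> {0<..<\<epsilon>}" for t
    proof -
      have "i \<in> top_indices c I t"
        using i top_indices_eq[OF I t0 t] by simp
      then show ?thesis
        using j by (simp add: maximizers_def)
    qed
    ultimately have "0 \<le> c \<bullet> x i 0 - c \<bullet> x j 0"
      using nonneg_at_left_endpoint[OF eps_pos] by blast
    then show ?thesis by simp
  qed
  then show "i \<in> maximizers (\<lambda>k. c \<bullet> x k 0) I"
    using i by (simp add: maximizers_def)
qed

text \<open>Perturbing c by a small multiple of u does not create new top indices at t0, and a top
  index i of the perturbed functional still maximizes it at time 0.\<close>
lemma top_indices_dominate_at_0:
  assumes I: "stable_face I" and t0: "t0 \<in> {0<..<\<epsilon>}"
    and y: "y \<in> conv_pts x I 0" and y_max: "\<forall>j\<in>I. c \<bullet> x j 0 \<le> c \<bullet> y"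
  shows "\<exists>i \<in> top_indices c I t0. u \<bullet> y \<le> u \<bullet> x i 0"
proof -
  have finI: "finite I"
    using I by (rule stable_face_finite)
  have "eventually (\<lambda>s. top_indices (c + s *\<^sub>R u) I t0 \<subseteq> top_indices c I t0) (at_right 0)"
  proof (rule eventually_maximizers_subset[OF finI])
    fix k
    have "((\<lambda>s. c \<bullet> x k t0 + s * (u \<bullet> x k t0)) \<longlongrightarrow> c \<bullet> x k t0 + 0 * (u \<bullet> x k t0)) (at_right 0)"
      by (intro tendsto_intros)
    then show "((\<lambda>s. (c + s *\<^sub>R u) \<bullet> x k t0) \<longlongrightarrow> c \<bullet> x k t0) (at_right 0)"
      by (simp add: inner_add_left)
  qed
  moreover have "eventually (\<lambda>s::real. 0 < s) (at_right 0)"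
    by (rule eventually_at_right_less)
  ultimately obtain s where s: "0 < s" "top_indices (c + s *\<^sub>R u) I t0 \<subseteq> top_indices c I t0"
    using eventually_happens'[OF trivial_limit_at_right_real] eventually_conj by blast
  let ?c' = "c + s *\<^sub>R u"
  have "I \<noteq> {}"
    using y by (auto simp: conv_pts_def)
  then obtain i where i: "i \<in> top_indices ?c' I t0"
    using maximizers_nonempty[OF finI, of "\<lambda>k. ?c' \<bullet> x k t0"] by blast
  then have "i \<in> maximizers (\<lambda>k. ?c' \<bullet> x k 0) I"
    using top_indices_subset_maximizers_at_0[OF I t0] by blast
  then have "?c' \<bullet> y \<le> ?c' \<bullet> x i 0"
    using y unfolding conv_pts_def
    by (intro inner_le_on_convex_hull[of y]) (auto simp: maximizers_def)
  moreover have "c \<bullet> x i 0 \<le> c \<bullet> y"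
    using y_max i by (simp add: maximizers_def)
  ultimately have "s * (u \<bullet> y) \<le> s * (u \<bullet> x i 0)"
    by (simp add: inner_add_left)
  then show ?thesis
    using s i by auto
qed

lemma conv_pts_top_indices_at_0:
  assumes I: "stable_face I" and t0: "t0 \<in> {0<..<\<epsilon>}"
  shows "conv_pts x (top_indices c I t0) 0 = {y \<in> conv_pts x I 0. \<forall>j\<in>I. c \<bullet> x j 0 \<le> c \<bullet> y}"
    (is "_ = ?F")
proof
  show "conv_pts x (top_indices c I t0) 0 \<subseteq> ?F"
  proof
    fix y assume y: "y \<in> conv_pts x (top_indices c I t0) 0"
    have "conv_pts x (top_indices c I t0) 0 \<subseteq> conv_pts x I 0"
      unfolding conv_pts_def by (intro hull_mono image_mono maximizers_subset)
    moreover have "c \<bullet> x j 0 \<le> c \<bullet> y" if "j \<in> I" for j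
      using y unfolding conv_pts_def
    proof (rule inner_ge_on_convex_hull)
      fix z assume "z \<in> (\<lambda>k. x k 0) ` top_indices c I t0"
      then show "c \<bullet> x j 0 \<le> c \<bullet> z"
        using that top_indices_subset_maximizers_at_0[OF I t0] by (auto simp: maximizers_def)
    qed
    ultimately show "y \<in> ?F"
      using y by blast
  qed
  show "?F \<subseteq> conv_pts x (top_indices c I t0) 0"
  proof
    fix y assume "y \<in> ?F"
    then have "\<exists>z \<in> (\<lambda>k. x k 0) ` top_indices c I t0. u \<bullet> y \<le> u \<bullet> z" for u
      using top_indices_dominate_at_0[OF I t0, of y c u] by blast
    then show "y \<in> conv_pts x (top_indices c I t0) 0"
      unfolding conv_pts_def
      by (intro mem_convex_hull_if_inner_le finite_imageI finite_subset[OF maximizers_subset]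
          stable_face_finite[OF I])
  qed
qed

lemma inner_constant_on_pts_at_0:
  assumes I: "stable_face I" and t0: "t0 \<in> {0<..<\<epsilon>}"
    and const: "(\<lambda>y. u \<bullet> y) constant_on (\<lambda>k. x k t0) ` I"
  shows "(\<lambda>y. u \<bullet> y) constant_on (\<lambda>k. x k 0) ` I"
proof -
  have "top_indices u I t0 = I"
    using const by (simp add: maximizers_eq_self_iff constant_on_image_iff)
  then have "maximizers (\<lambda>k. u \<bullet> x k 0) I = I"
    using top_indices_subset_maximizers_at_0[OF I t0, of u] maximizers_subset[of "\<lambda>k. u \<bullet> x k 0" I]
    by blast
  then show ?thesis
    by (simp add: maximizers_eq_self_iff constant_on_image_iff)
qed

lemma exists_inner_constant_at_0_only:
  assumes I: "stable_face I" and t0: "t0 \<in> {0<..<\<epsilon>}"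
    and drop: "aff_dim (conv_pts x I 0) \<noteq> aff_dim (conv_pts x I t0)"
  obtains u where "(\<lambda>y. u \<bullet> y) constant_on (\<lambda>k. x k 0) ` I"
    "\<not> (\<lambda>y. u \<bullet> y) constant_on (\<lambda>k. x k t0) ` I"
proof -
  let ?A0 = "(\<lambda>k. x k 0) ` I" and ?At = "(\<lambda>k. x k t0) ` I"
  have drop': "aff_dim ?A0 \<noteq> aff_dim ?At"
    using drop unfolding conv_pts_def by (simp add: aff_dim_convex_hull)
  then have "I \<noteq> {}"
    by auto
  then have "aff_dim ?A0 \<le> aff_dim ?At"
    using inner_constant_on_pts_at_0[OF I t0]
    by (intro aff_dim_le_if_inner_constant_on) auto
  then show ?thesis
    using that drop' aff_dim_le_if_inner_constant_on[of ?A0 ?At] \<open>I \<noteq> {}\<close> by force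
qed

lemma conv_pts_top_indices_at_0_eq:
  assumes I: "stable_face I" and t0: "t0 \<in> {0<..<\<epsilon>}"
    and const: "(\<lambda>y. u \<bullet> y) constant_on (\<lambda>k. x k 0) ` I"
  shows "conv_pts x (top_indices u I t0) 0 = conv_pts x I 0"
proof -
  have "(\<lambda>y. u \<bullet> y) constant_on conv_pts x I 0"
    using const unfolding conv_pts_def by (rule inner_constant_on_convex_hull)
  moreover have "x j 0 \<in> conv_pts x I 0" if "j \<in> I" for j
    unfolding conv_pts_def using that by (simp add: hull_inc)
  ultimately have "\<forall>y \<in> conv_pts x I 0. \<forall>j\<in>I. u \<bullet> x j 0 \<le> u \<bullet> y"
    unfolding constant_on_def by force
  then show ?thesis
    using conv_pts_top_indices_at_0[OF I t0, of u] by blast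
qed

text \<open>If the dimension drops in the limit, the top indices of a functional that is constant on
  the points at time 0 but not at positive times span a smaller face with the same limit.\<close>
lemma exists_stable_face_with_limit:
  assumes "stable_face I"
  shows "\<exists>J. stable_face J \<and> (\<forall>t\<in>{0<..<\<epsilon>}. aff_dim (conv_pts x J t) = aff_dim (conv_pts x I 0))
             \<and> conv_pts x J 0 = conv_pts x I 0"
  using assms
proof (induction "card I" arbitrary: I rule: less_induct)
  case less
  note I = less.prems
  have t0: "\<epsilon> / 2 \<in> {0<..<\<epsilon>}"
    using eps_pos by simp
  show ?case
  proof (cases "aff_dim (conv_pts x I 0) = aff_dim (conv_pts x I (\<epsilon> / 2))")
    case True
    have "aff_dim (conv_pts x I t) = aff_dim (conv_pts x I 0)" if "t \<in> {0<..<\<epsilon>}" for t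
      using faces_stable[OF _ t0 that _ refl] I True t0 by (simp add: stable_face_def)
    then show ?thesis
      using I by blast
  next
    case False
    then obtain u where u0: "(\<lambda>y. u \<bullet> y) constant_on (\<lambda>k. x k 0) ` I"
      and ut: "\<not> (\<lambda>y. u \<bullet> y) constant_on (\<lambda>k. x k (\<epsilon> / 2)) ` I"
      using exists_inner_constant_at_0_only[OF I t0] by blast
    let ?S = "top_indices u I (\<epsilon> / 2)"
    have "?S \<noteq> I"
      using ut by (simp add: maximizers_eq_self_iff constant_on_image_iff)
    then have "?S \<subset> I"
      using maximizers_subset[of "\<lambda>k. u \<bullet> x k (\<epsilon> / 2)" I] by blast
    then have "card ?S < card I"
      by (rule psubset_card_mono[OF stable_face_finite[OF I]])
    moreover have "stable_face ?S"
      using I t0 by (rule stable_face_top_indices)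
    ultimately show ?thesis
      using less.hyps[of ?S] conv_pts_top_indices_at_0_eq[OF I t0 u0] by simp
  qed
qed

lemma face_at_0_eq_stable_face_limit:
  assumes F: "F face_of conv_pts x {1..r} 0"
  obtains I where "stable_face I" "conv_pts x I 0 = F"
proof (cases "F = {}")
  case True
  then show ?thesis
    using that[of "{}"] by (simp add: stable_face_def conv_pts_def)
next
  case False
  then obtain c where c: "F = {y \<in> conv_pts x {1..r} 0. \<forall>j\<in>{1..r}. c \<bullet> x j 0 \<le> c \<bullet> y}"
    using face_of_convex_hull_eq_maximizing[of "(\<lambda>i. x i 0) ` {1..r}" F] F
    unfolding conv_pts_def by auto
  have t0: "\<epsilon> / 2 \<in> {0<..<\<epsilon>}"
    using eps_pos by simp
  show ?thesis
  proof (rule that)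
    show "stable_face (top_indices c {1..r} (\<epsilon> / 2))"
      using stable_face_all t0 by (rule stable_face_top_indices)
    show "conv_pts x (top_indices c {1..r} (\<epsilon> / 2)) 0 = F"
      using conv_pts_top_indices_at_0[OF stable_face_all t0] c by simp
  qed
qed

end

theorem proposition6p2:
  fixes x :: "nat \<Rightarrow> real \<Rightarrow> 'a::euclidean_space"
    and r :: nat and \<epsilon> :: real
  assumes r_pos: "r \<ge> 1"
    and eps_pos: "\<epsilon> > 0"
    and cont: "\<And>i. i \<in> {1..r} \<Longrightarrow> continuous_on {0..<\<epsilon>} (x i)"
    and distinct: "\<And>t. t \<in> {0<..<\<epsilon>} \<Longrightarrow> inj_on (\<lambda>i. x i t) {1..r}"
    and vertices: "\<And>t i. t \<in> {0<..<\<epsilon>} \<Longrightarrow> i \<in> {1..r} \<Longrightarrow>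
                     {x i t} face_of conv_pts x {1..r} t"
    and faces_stable: "\<And>I k t t'. I \<subseteq> {1..r} \<Longrightarrow> t \<in> {0<..<\<epsilon>} \<Longrightarrow> t' \<in> {0<..<\<epsilon>} \<Longrightarrow>
                     conv_pts x I t face_of conv_pts x {1..r} t \<Longrightarrow> aff_dim (conv_pts x I t) = k \<Longrightarrow>
                     conv_pts x I t' face_of conv_pts x {1..r} t' \<and> aff_dim (conv_pts x I t') = k"
    and edges_parallel: "\<And>I t t' t''. I \<subseteq> {1..r} \<Longrightarrow> card I = 2 \<Longrightarrow>
                     t \<in> {0<..<\<epsilon>} \<Longrightarrow> t' \<in> {0<..<\<epsilon>} \<Longrightarrow> t'' \<in> {0<..<\<epsilon>} \<Longrightarrow>
                     conv_pts x I t face_of conv_pts x {1..r} t \<Longrightarrow> aff_dim (conv_pts x I t) = 1 \<Longrightarrow>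
                     parallel_sets (conv_pts x I t') (conv_pts x I t'')"
  shows "\<forall>F k. F face_of conv_pts x {1..r} 0 \<and> aff_dim F = k \<longrightarrow>
           (\<exists>I \<subseteq> {1..r}. (\<forall>t \<in> {0<..<\<epsilon>}. conv_pts x I t face_of conv_pts x {1..r} t
                                           \<and> aff_dim (conv_pts x I t) = k)
                         \<and> conv_pts x I 0 = F)"
proof (intro allI impI, elim conjE)
  interpret stable_polytope_family x r \<epsilon>
    using eps_pos cont faces_stable edges_parallel by unfold_locales
  fix F k
  assume F: "F face_of conv_pts x {1..r} 0" and k: "aff_dim F = k"
  obtain I where I: "stable_face I" "conv_pts x I 0 = F"
    using F by (rule face_at_0_eq_stable_face_limit)
  then obtain J where "stable_face J" "\<forall>t\<in>{0<..<\<epsilon>}. aff_dim (conv_pts x J t) = k" "conv_pts x J 0 = F"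
    using exists_stable_face_with_limit[OF I(1)] k by auto
  then show "\<exists>I \<subseteq> {1..r}. (\<forall>t \<in> {0<..<\<epsilon>}. conv_pts x I t face_of conv_pts x {1..r} t
                                  \<and> aff_dim (conv_pts x I t) = k) \<and> conv_pts x I 0 = F"
    unfolding stable_face_def by blast
qed

end
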